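(* Let $d\ge1$, let $R_1,\dots,R_k$ be a fixed sequence of subsets of $V$, each of size $1$ or $2$, and let $i\in V$. Suppose $|R_1|=2$ and $i\in R_1$. Run Algorithm 1 on $R_1,\dots,R_k$. Let $\mu^i$ be the expected number of rounds in which $i$ is matched. Let $\mu^i_{\mathrm{receiver}}$ be the same expectation conditioned on round $1$ being a receiver round, and $\mu^i_{\mathrm{sender}}$ the same expectation conditioned on round $1$ being a sender round. Then $$\mu^i_{\mathrm{receiver}}\le\mu^i\le\mu^i_{\mathrm{sender}}.$$
   Context: Online correlated rental setting: there is a finite set $V$ of offline vertices and an integer $d\ge1$. Proposals (subsets of $V$ of size $1$ or $2$) are revealed one per round; at each round the algorithm selects one vertex of the proposal. An offline vertex $i$ is matched at round $j$ if it is selected at round $j$ and was not matched at any round $t$ with $j-d<t<j$. Algorithm 1: it keeps a state $\tau_{i,t}\in\{\mathrm{sel},\mathrm{nsel},\mathrm{unk}\}$ for every $i$ and round $t$, initially all $\mathrm{unk}$. All random draws are fresh and independent. "Reset $i$" at round $j$ means setting $\tau_{i,t}=\mathrm{unk}$ for all $t\in[j+1,j+d-1]$. (1) If the proposal at round $j$ is $\{i_1\}$: reset $i_1$ and select $i_1$. (2) If the proposal is $\{i_1,i_2\}$: with probability $1/2$ the round is a sender, and otherwise it is a receiver. - Sender: draw $\ell,m\in\{1,2\}$ independently and uniformly. Reset $i_{3-m}$. Set $\tau_{i_m,t}=\mathrm{sel}$ for $t\in[j+1,j+d-1]$ if $\ell=m$, and $\mathrm{nsel}$ otherwise. Select $i_\ell$.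 - Receiver: draw $m\in\{1,2\}$ uniformly. If $\tau_{i_m,j}=\mathrm{sel}$, let $\ell=3-m$; if $\tau_{i_m,j}=\mathrm{nsel}$, let $\ell=m$; otherwise draw $\ell$ uniformly from $\{1,2\}$. Reset $i_1,i_2$. Select $i_\ell$. *)

theory Defs
  imports "HOL-Probability.Probability"
begin

datatype tau = Sel | NSel | Unk

datatype role = Single | Sender | Receiver

type_synonym 'a tstate = "'a \<Rightarrow> nat \<Rightarrow> tau"

definition set_tau :: "nat \<Rightarrow> nat \<Rightarrow> 'a \<Rightarrow> tau \<Rightarrow> 'a tstate \<Rightarrow> 'a tstate" where
  "set_tau d j x val \<tau> = (\<lambda>y t. if y = x \<and> j + 1 \<le> t \<and> t \<le> j + d - 1 then val else \<tau> y t)"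

definition reset :: "nat \<Rightarrow> nat \<Rightarrow> 'a \<Rightarrow> 'a tstate \<Rightarrow> 'a tstate" where
  "reset d j x \<tau> = set_tau d j x Unk \<tau>"

text \<open>Labelling i1, i2 of a two-element proposal (an arbitrary fixed choice; True = i1).\<close>
definition lab :: "'a set \<Rightarrow> bool \<Rightarrow> 'a" where
  "lab R b = (let p = (SOME p. R = {fst p, snd p} \<and> fst p \<noteq> snd p) in if b then fst p else snd p)"

text \<open>One round j of Algorithm 1 on proposal R: new state, selected vertex, role of the round.
  The uniform draws from {1,2} are fair coins (True = index 1).\<close>
definition step :: "nat \<Rightarrow> nat \<Rightarrow> 'a set \<Rightarrow> 'a tstate \<Rightarrow> ('a tstate \<times> 'a \<times> role) pmf" where
  "step d j R \<tau> =
    (if card R = 1 then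
       (let i1 = the_elem R in return_pmf (reset d j i1 \<tau>, i1, Single))
     else
       do {
         s \<leftarrow> bernoulli_pmf (1/2);
         if s then
           do {
             l \<leftarrow> bernoulli_pmf (1/2);
             m \<leftarrow> bernoulli_pmf (1/2);
             let \<tau>1 = reset d j (lab R (\<not> m)) \<tau>;
             let \<tau>2 = set_tau d j (lab R m) (if l = m then Sel else NSel) \<tau>1;
             return_pmf (\<tau>2, lab R l, Sender)
           }
         else
           do {
             m \<leftarrow> bernoulli_pmf (1/2);
             l \<leftarrow> (case \<tau> (lab R m) j of
                    Sel \<Rightarrow> return_pmf (\<not> m)
                  | NSel \<Rightarrow> return_pmf m
                  | Unk \<Rightarrow> bernoulli_pmf (1/2));
             let \<tau>1 = reset d j (lab R True) (reset d j (lab R False) \<tau>);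
             return_pmf (\<tau>1, lab R l, Receiver)
           }
       })"

primrec run :: "nat \<Rightarrow> 'a set list \<Rightarrow> nat \<Rightarrow> 'a tstate \<Rightarrow> ('a list \<times> role list) pmf" where
  "run d [] j \<tau> = return_pmf ([], [])"
| "run d (R # Rs) j \<tau> =
     do {
       (\<tau>', v, r) \<leftarrow> step d j R \<tau>;
       (vs, rs) \<leftarrow> run d Rs (Suc j) \<tau>';
       return_pmf (v # vs, r # rs)
     }"

definition alg1 :: "nat \<Rightarrow> 'a set list \<Rightarrow> ('a list \<times> role list) pmf" where
  "alg1 d Rs = run d Rs 1 (\<lambda>_ _. Unk)"

function matched :: "nat \<Rightarrow> 'a list \<Rightarrow> 'a \<Rightarrow> nat \<Rightarrow> bool" where
  "matched d vs i j =
     (1 \<le> j \<and> j \<le> length vs \<and> vs ! (j - 1) = i \<and>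
      (\<forall>t \<in> {t. j - d < t \<and> t < j}. \<not> matched d vs i t))"
  by auto
termination by (relation "Wellfounded.measure (\<lambda>(d, vs, i, j). j)") auto

definition num_matched :: "nat \<Rightarrow> 'a \<Rightarrow> 'a list \<times> role list \<Rightarrow> real" where
  "num_matched d i out = real (card {j \<in> {1..length (fst out)}. matched d (fst out) i j})"

end

theory Submission
  imports Defs
begin

text \<open>
  Round 1 is a sender or a receiver round with probability 1/2 each, so the unconditional
  expectation is the average of the two conditional ones and it suffices to show that the
  receiver expectation is at most the sender expectation. After a receiver round every state is
  unknown again. After a sender round one vertex \<open>x\<close> of \<open>R_1\<close> carries a mark, \<open>sel\<close> or \<open>nsel\<close>,
  for rounds 2 to \<open>d\<close>, and the mark is correlated with the vertex selected in round 1: averaged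
  over the coins, the sender expectation pairs \<open>sel\<close> on \<open>x\<close> with the continuation that began by
  selecting \<open>x\<close>, and \<open>nsel\<close> on \<open>x\<close> with the one that began with the other vertex \<open>z\<close>.

  Counting the matches of \<open>i\<close> is a greedy scan in which a match blocks the next \<open>d - 1\<close>
  rounds. If round 1 selected \<open>i\<close>, the selections within the window are irrelevant; if it did
  not, selecting \<open>i\<close> there can only help. Hence, inside the window, choosing \<open>x\<close> over \<open>z\<close> gains
  at most as much after a start with \<open>x\<close> as after a start with \<open>z\<close>. A receiver that reads
  \<open>sel\<close> on \<open>x\<close> avoids \<open>x\<close> and one that reads \<open>nsel\<close> picks it, so by induction over the
  remaining rounds the marked pair of continuations does at least as well as the unmarked one.
\<close>

section \<open>Counting matches greedily\<close>

declare matched.simps [simp del]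

lemma matched_imp_bounds: "matched d L i t \<Longrightarrow> 1 \<le> t \<and> t \<le> length L \<and> L ! (t - 1) = i"
  by (subst (asm) matched.simps) auto

lemma matched_append: "t \<le> length L \<Longrightarrow> matched d (L @ M) i t = matched d L i t"
proof (induction t rule: less_induct)
  case (less t)
  then show ?case
    by (subst (1 2) matched.simps) (auto simp: nth_append)
qed

text \<open>Some match in \<open>L\<close> still blocks round \<open>length L + 1 + n\<close>.\<close>
definition in_cooldown :: "nat \<Rightarrow> 'a list \<Rightarrow> 'a \<Rightarrow> nat \<Rightarrow> bool" where
  "in_cooldown d L i n \<longleftrightarrow> (\<exists>t. matched d L i t \<and> length L + n + 1 < t + d)"

lemma matched_snoc_last:
  "matched d (L @ [v]) i (Suc (length L)) \<longleftrightarrow> v = i \<and> \<not> in_cooldown d L i 0"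
proof -
  have "matched d (L @ [v]) i (Suc (length L)) \<longleftrightarrow>
      v = i \<and> (\<forall>s. Suc (length L) - d < s \<and> s < Suc (length L) \<longrightarrow> \<not> matched d L i s)"
    by (subst matched.simps) (auto simp: nth_append matched_append)
  also have "\<dots> \<longleftrightarrow> v = i \<and> \<not> in_cooldown d L i 0"
  proof -
    have "Suc (length L) - d < s \<and> s < Suc (length L) \<longleftrightarrow> length L + 0 + 1 < s + d"
      if "matched d L i s" for s
      using matched_imp_bounds[OF that] by auto
    then show ?thesis unfolding in_cooldown_def by blast
  qed
  finally show ?thesis .
qed

lemma in_cooldown_snoc:
  "in_cooldown d (L @ [v]) i n \<longleftrightarrow>
     matched d (L @ [v]) i (Suc (length L)) \<and> Suc n < d \<or> in_cooldown d L i (Suc n)"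
proof -
  have split: "matched d (L @ [v]) i t \<longleftrightarrow>
      (if t = Suc (length L) then matched d (L @ [v]) i (Suc (length L)) else matched d L i t)"
    for t
    using matched_imp_bounds[of d "L @ [v]" i t] matched_imp_bounds[of d L i t]
      matched_append[where t=t and L=L and M="[v]"] by (auto simp: le_Suc_eq)
  show ?thesis
    unfolding in_cooldown_def
  proof (intro iffI)
    assume "\<exists>t. matched d (L @ [v]) i t \<and> length (L @ [v]) + n + 1 < t + d"
    then obtain t where "matched d (L @ [v]) i t" "length (L @ [v]) + n + 1 < t + d" by blast
    then show "matched d (L @ [v]) i (Suc (length L)) \<and> Suc n < d \<or>
        (\<exists>t. matched d L i t \<and> length L + Suc n + 1 < t + d)"
      using split[of t] by (auto split: if_splits)
  next
    assume "matched d (L @ [v]) i (Suc (length L)) \<and> Suc n < d \<or>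
        (\<exists>t. matched d L i t \<and> length L + Suc n + 1 < t + d)"
    then show "\<exists>t. matched d (L @ [v]) i t \<and> length (L @ [v]) + n + 1 < t + d"
    proof
      assume "\<exists>t. matched d L i t \<and> length L + Suc n + 1 < t + d"
      then obtain t where "matched d L i t" "length L + Suc n + 1 < t + d" by blast
      then show ?thesis
        using split[of t] matched_imp_bounds[of d L i t] by (intro exI[of _ t]) auto
    qed (intro exI[of _ "Suc (length L)"], auto)
  qed
qed

lemma in_cooldown_bound: "in_cooldown d L i n \<Longrightarrow> n < d"
  unfolding in_cooldown_def by (fastforce dest: matched_imp_bounds)

lemma card_matched_snoc:
  "card {t \<in> {1..length (L @ [v])}. matched d (L @ [v]) i t} =
     card {t \<in> {1..length L}. matched d L i t} +
     (if matched d (L @ [v]) i (Suc (length L)) then 1 else 0)"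
proof -
  have "{t \<in> {1..length (L @ [v])}. matched d (L @ [v]) i t} =
      {t \<in> {1..length L}. matched d L i t} \<union>
      (if matched d (L @ [v]) i (Suc (length L)) then {Suc (length L)} else {})"
    by (auto simp: le_Suc_eq matched_append)
  then show ?thesis by auto
qed

text \<open>The number of matches of \<open>i\<close> in \<open>L\<close> when \<open>i\<close> is still blocked for the first \<open>k\<close> rounds.\<close>
fun greedy_count :: "nat \<Rightarrow> 'a \<Rightarrow> nat \<Rightarrow> 'a list \<Rightarrow> nat" where
  "greedy_count d i k [] = 0"
| "greedy_count d i k (v # L) =
     (if v = i \<and> k = 0 then Suc (greedy_count d i (d - 1) L) else greedy_count d i (k - 1) L)"

text \<open>The same scan as a left fold, which matches the backward-looking definition of \<open>matched\<close>.\<close>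
definition greedy_step :: "nat \<Rightarrow> 'a \<Rightarrow> nat \<times> nat \<Rightarrow> 'a \<Rightarrow> nat \<times> nat" where
  "greedy_step d i s v = (if v = i \<and> snd s = 0 then (Suc (fst s), d - 1) else (fst s, snd s - 1))"

lemma fst_foldl_greedy_step:
  "fst (foldl (greedy_step d i) (c, k) L) = c + greedy_count d i k L"
  by (induction L arbitrary: c k) (simp_all add: greedy_step_def)

lemma foldl_greedy_step_invariant:
  "foldl (greedy_step d i) (0, 0) L = (c, k) \<Longrightarrow>
     c = card {t \<in> {1..length L}. matched d L i t} \<and> (\<forall>n. k \<le> n \<longleftrightarrow> \<not> in_cooldown d L i n)"
proof (induction L arbitrary: c k rule: rev_induct)
  case Nil
  then show ?case by (auto simp: in_cooldown_def dest: matched_imp_bounds)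
next
  case (snoc v L)
  obtain c0 k0 where prefix: "foldl (greedy_step d i) (0, 0) L = (c0, k0)" by fastforce
  note IH = snoc.IH[OF prefix]
  have ck: "(c, k) = greedy_step d i (c0, k0) v" using snoc.prems prefix by simp
  have last: "matched d (L @ [v]) i (Suc (length L)) \<longleftrightarrow> v = i \<and> k0 = 0"
    using IH[THEN conjunct2, rule_format, of 0] by (simp add: matched_snoc_last)
  have card: "card {t \<in> {1..length (L @ [v])}. matched d (L @ [v]) i t} =
      c0 + (if v = i \<and> k0 = 0 then 1 else 0)"
    using card_matched_snoc[of L v d i] IH last by simp
  show ?case
  proof (cases "v = i \<and> k0 = 0")
    case True
    then show ?thesis
      using IH ck last card by (auto simp: greedy_step_def in_cooldown_snoc dest: in_cooldown_bound)
  next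
    case False
    then have "k \<le> n \<longleftrightarrow> k0 \<le> Suc n" for n using ck by (auto simp: greedy_step_def)
    then show ?thesis
      using IH ck last card False by (auto simp: greedy_step_def in_cooldown_snoc)
  qed
qed

lemma num_matched_eq_greedy_count: "num_matched d i out = real (greedy_count d i 0 (fst out))"
proof -
  obtain c k where "foldl (greedy_step d i) (0, 0) (fst out) = (c, k)" by fastforce
  then show ?thesis
    using foldl_greedy_step_invariant fst_foldl_greedy_step[of d i 0 0 "fst out"]
    unfolding num_matched_def by fastforce
qed

lemma greedy_count_blocked_position:
  "length p < k \<Longrightarrow> greedy_count d i k (p @ a # vs) = greedy_count d i k (p @ b # vs)"
  by (induction p arbitrary: k) auto

lemma greedy_count_mono_aux:
  assumes "list_all2 (\<lambda>a b. a = i \<longrightarrow> b = i) L L'"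
  shows "(k' \<le> k \<longrightarrow> greedy_count d i k L \<le> greedy_count d i k' L') \<and>
    (k' \<le> d - 1 \<longrightarrow> greedy_count d i k L \<le> Suc (greedy_count d i k' L'))"
  using assms
proof (induction L L' arbitrary: k k' rule: list_all2_induct)
  case (Cons v L v' L')
  have IH1: "greedy_count d i a L \<le> greedy_count d i b L'" if "b \<le> a" for a b
    using Cons.IH[of b a] that by simp
  have IH2: "greedy_count d i a L \<le> Suc (greedy_count d i b L')" if "b \<le> d - 1" for a b
    using Cons.IH[of b a] that by simp
  show ?case
  proof (intro conjI impI)
    assume "k' \<le> k"
    then show "greedy_count d i k (v # L) \<le> greedy_count d i k' (v' # L')"
      using Cons.hyps IH1[of "d - 1" "d - 1"] IH1[of "k' - 1" "k - 1"] IH2[of "d - 1" "k - 1"]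
      by simp
  next
    assume "k' \<le> d - 1"
    then show "greedy_count d i k (v # L) \<le> Suc (greedy_count d i k' (v' # L'))"
      using IH1[of "d - 1" "d - 1"] IH2[of "d - 1" "k - 1"]
        IH1[of "k' - 1" "d - 1"] IH2[of "k' - 1" "k - 1"] by simp
  qed
qed simp

lemma greedy_count_mono:
  assumes "list_all2 (\<lambda>a b. a = i \<longrightarrow> b = i) L L'"
  shows "greedy_count d i k L \<le> greedy_count d i k L'"
  using greedy_count_mono_aux[OF assms, where k=k and k'=k and d=d] by simp

lemma list_all2_single_change:
  "list_all2 (\<lambda>a b. a = i \<longrightarrow> b = i) (p @ a # vs) (p @ b # vs) \<longleftrightarrow> (a = i \<longrightarrow> b = i)"
  by (induction p) (auto simp: list_all2_refl)

lemma greedy_count_exchange: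
  assumes "length p + 2 \<le> d" "x \<noteq> y" "i = x \<or> i = y"
  shows "greedy_count d i 0 (x # p @ x # vs) + greedy_count d i 0 (y # p @ z # vs)
    \<le> greedy_count d i 0 (x # p @ z # vs) + greedy_count d i 0 (y # p @ x # vs)"
proof -
  have blocked: "greedy_count d i (d - 1) (p @ x # vs) = greedy_count d i (d - 1) (p @ z # vs)"
    using assms(1) by (intro greedy_count_blocked_position) simp
  show ?thesis
  proof (cases "i = x")
    case True
    then have "greedy_count d i 0 (p @ z # vs) \<le> greedy_count d i 0 (p @ x # vs)"
      by (intro greedy_count_mono) (simp add: list_all2_single_change)
    then show ?thesis using True assms(2) blocked by simp
  next
    case False
    then have "greedy_count d i 0 (p @ x # vs) \<le> greedy_count d i 0 (p @ z # vs)"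
      by (intro greedy_count_mono) (simp add: list_all2_single_change)
    then show ?thesis using False assms(3) blocked by simp
  qed
qed

section \<open>Expected values of runs\<close>

lemma expectation_bind_pmf_finite:
  fixes h :: "'b \<Rightarrow> real"
  assumes "finite (set_pmf p)" "\<And>x. x \<in> set_pmf p \<Longrightarrow> finite (set_pmf (f x))"
  shows "measure_pmf.expectation (p \<bind> f) h =
    measure_pmf.expectation p (\<lambda>a. measure_pmf.expectation (f a) h)"
  using assms
  by (simp add: pmf_expectation_bind[of "set_pmf p"] integral_measure_pmf[of "set_pmf p"])

lemma expectation_cond_pmf_finite:
  fixes f :: "'b \<Rightarrow> real"
  assumes fin: "finite (set_pmf p)" and ne: "set_pmf p \<inter> A \<noteq> {}"
  shows "measure_pmf.expectation (cond_pmf p A) f =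
    measure_pmf.expectation p (\<lambda>x. indicator A x * f x) / measure_pmf.prob p A"
proof -
  have "measure_pmf.expectation (cond_pmf p A) f = (\<Sum>a\<in>set_pmf p. pmf (cond_pmf p A) a *\<^sub>R f a)"
    by (rule integral_measure_pmf[OF fin]) (use ne in auto)
  also have "\<dots> = (\<Sum>a\<in>set_pmf p. pmf p a *\<^sub>R (indicator A a * f a)) / measure_pmf.prob p A"
    by (simp add: pmf_cond[OF ne] sum_divide_distrib indicator_def) (rule sum.cong, auto)
  also have "(\<Sum>a\<in>set_pmf p. pmf p a *\<^sub>R (indicator A a * f a)) =
      measure_pmf.expectation p (\<lambda>x. indicator A x * f x)"
    by (rule integral_measure_pmf[OF fin, symmetric]) auto
  finally show ?thesis .
qed

lemma expectation_add_finite: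
  fixes f g :: "'b \<Rightarrow> real"
  shows "finite (set_pmf p) \<Longrightarrow>
    measure_pmf.expectation p f + measure_pmf.expectation p g =
    measure_pmf.expectation p (\<lambda>x. f x + g x)"
  by (simp add: integrable_measure_pmf_finite)

lemma expectation_mono_finite:
  fixes f g :: "'b \<Rightarrow> real"
  shows "finite (set_pmf p) \<Longrightarrow> (\<And>x. f x \<le> g x) \<Longrightarrow>
    measure_pmf.expectation p f \<le> measure_pmf.expectation p g"
  by (intro integral_mono) (simp_all add: integrable_measure_pmf_finite)

lemma finite_set_pmf_step: "finite (set_pmf (step d j R \<tau>))"
  unfolding step_def by (auto simp: Let_def split: tau.splits)

lemma finite_set_pmf_run: "finite (set_pmf (run d Rs j \<tau>))"
  by (induction Rs arbitrary: j \<tau>) (auto simp: finite_set_pmf_step split: prod.splits)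

lemma run_Cons_map:
  "run d (R # Rs) j \<tau> =
     step d j R \<tau> \<bind> (\<lambda>(\<tau>', v, r). map_pmf (\<lambda>(vs, rs). (v # vs, r # rs)) (run d Rs (Suc j) \<tau>'))"
  by (simp add: map_pmf_def case_prod_beta' o_def)

definition run_exp :: "nat \<Rightarrow> 'a set list \<Rightarrow> nat \<Rightarrow> 'a tstate \<Rightarrow> ('a list \<times> role list \<Rightarrow> real) \<Rightarrow> real"
  where "run_exp d Rs j \<tau> F = measure_pmf.expectation (run d Rs j \<tau>) F"

definition prepend_out :: "'a \<Rightarrow> role \<Rightarrow> ('a list \<times> role list \<Rightarrow> real) \<Rightarrow> 'a list \<times> role list \<Rightarrow> real"
  where "prepend_out v r F = (\<lambda>out. F (v # fst out, r # snd out))"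

lemma run_exp_Nil: "run_exp d [] j \<tau> F = F ([], [])"
  unfolding run_exp_def by simp

lemma run_exp_Cons:
  "run_exp d (R # Rs) j \<tau> F =
     measure_pmf.expectation (step d j R \<tau>)
       (\<lambda>(\<tau>', v, r). run_exp d Rs (Suc j) \<tau>' (prepend_out v r F))"
  unfolding run_exp_def run_Cons_map prepend_out_def
  by (subst expectation_bind_pmf_finite)
    (auto simp: finite_set_pmf_step finite_set_pmf_run case_prod_beta')

lemma run_exp_const: "run_exp d Rs j \<tau> (\<lambda>_. c) = c"
  unfolding run_exp_def by simp

lemma run_exp_add:
  "run_exp d Rs j \<tau> F + run_exp d Rs j \<tau> G = run_exp d Rs j \<tau> (\<lambda>out. F out + G out)"
  unfolding run_exp_def by (rule expectation_add_finite[OF finite_set_pmf_run])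

lemma run_exp_mono: "(\<And>out. F out \<le> G out) \<Longrightarrow> run_exp d Rs j \<tau> F \<le> run_exp d Rs j \<tau> G"
  unfolding run_exp_def by (rule expectation_mono_finite[OF finite_set_pmf_run])

definition forget_before :: "nat \<Rightarrow> 'a tstate \<Rightarrow> 'a tstate" where
  "forget_before j \<tau> = (\<lambda>y t. if t < j then Unk else \<tau> y t)"

lemma forget_before_set_tau:
  "forget_before (Suc j) (set_tau d j x v \<tau>) = set_tau d j x v (forget_before (Suc j) \<tau>)"
  by (auto simp: forget_before_def set_tau_def fun_eq_iff)

lemma forget_before_Suc: "forget_before (Suc j) (forget_before j \<tau>) = forget_before (Suc j) \<tau>"
  by (auto simp: forget_before_def fun_eq_iff)

lemma forget_before_apply [simp]: "forget_before j \<tau> y j = \<tau> y j"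
  by (simp add: forget_before_def)

lemma step_forget_before:
  "map_pmf (apfst (forget_before (Suc j))) (step d j R \<tau>) =
     map_pmf (apfst (forget_before (Suc j))) (step d j R (forget_before j \<tau>))"
proof (cases "card R = 1")
  case False
  then show ?thesis
    unfolding step_def reset_def Let_def
    by (simp only: if_False map_bind_pmf)
      (intro bind_pmf_cong refl; simp add: map_bind_pmf forget_before_set_tau forget_before_Suc)
qed (simp add: step_def reset_def Let_def forget_before_set_tau forget_before_Suc)

lemma run_forget_before: "run d Rs j \<tau> = run d Rs j (forget_before j \<tau>)"
proof (induction Rs arbitrary: j \<tau>)
  case (Cons R Rs)
  define g where "g = (\<lambda>(\<tau>', v, r). map_pmf (\<lambda>(vs, rs). (v # vs, r # rs)) (run d Rs (Suc j) \<tau>'))"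
  have g: "g = g \<circ> apfst (forget_before (Suc j))"
  proof
    fix z
    show "g z = (g \<circ> apfst (forget_before (Suc j))) z"
      using Cons.IH[of "Suc j" "fst z"] by (cases z) (simp add: g_def)
  qed
  have "run d (R # Rs) j \<tau> = map_pmf (apfst (forget_before (Suc j))) (step d j R \<tau>) \<bind> g"
    unfolding run_Cons_map g_def[symmetric] by (subst g) (simp add: bind_map_pmf o_def)
  also have "\<dots> = map_pmf (apfst (forget_before (Suc j))) (step d j R (forget_before j \<tau>)) \<bind> g"
    by (simp only: step_forget_before[of j d R \<tau>])
  also have "\<dots> = run d (R # Rs) j (forget_before j \<tau>)"
    unfolding run_Cons_map g_def[symmetric] by (subst (2) g) (simp add: bind_map_pmf o_def)
  finally show ?case .
qed simp

lemma run_exp_forget_before: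
  "forget_before j \<tau> = forget_before j \<tau>' \<Longrightarrow> run_exp d Rs j \<tau> F = run_exp d Rs j \<tau>' F"
  unfolding run_exp_def by (metis run_forget_before)

section \<open>One round of the algorithm\<close>

lemma lab_two:
  assumes "card R = 2"
  shows "R = {lab R True, lab R False}" "lab R True \<noteq> lab R False"
proof -
  obtain a b where "R = {a, b}" "a \<noteq> b" using assms card_2_iff by metis
  then have "\<exists>p. R = {fst p, snd p} \<and> fst p \<noteq> snd p" by (intro exI[of _ "(a, b)"]) auto
  from someI_ex[OF this] show "R = {lab R True, lab R False}" "lab R True \<noteq> lab R False"
    unfolding lab_def Let_def by auto
qed

lemma lab_pair:
  assumes "R = {x, z}" "x \<noteq> z"
  obtains b where "lab R b = x" "lab R (\<not> b) = z"
proof -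
  have "card R = 2" using assms by simp
  from lab_two[OF this] assms
  have "lab R True = x \<and> lab R False = z \<or> lab R False = x \<and> lab R True = z"
    by (auto simp: doubleton_eq_iff)
  then show ?thesis using that by (metis (full_types))
qed

lemma card_two_other: "card R = 2 \<Longrightarrow> x \<in> R \<Longrightarrow> \<exists>z. R = {x, z} \<and> x \<noteq> z"
  by (auto simp: card_2_iff doubleton_eq_iff)

definition sender_state :: "nat \<Rightarrow> nat \<Rightarrow> 'a set \<Rightarrow> 'a tstate \<Rightarrow> bool \<Rightarrow> bool \<Rightarrow> 'a tstate" where
  "sender_state d j R \<tau> l m =
     set_tau d j (lab R m) (if l = m then Sel else NSel) (reset d j (lab R (\<not> m)) \<tau>)"

definition receiver_state :: "nat \<Rightarrow> nat \<Rightarrow> 'a set \<Rightarrow> 'a tstate \<Rightarrow> 'a tstate" where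
  "receiver_state d j R \<tau> = reset d j (lab R True) (reset d j (lab R False) \<tau>)"

text \<open>The mean of \<open>g\<close> at the vertex selected by a receiver that has drawn \<open>x\<close> (the other
  vertex being \<open>y\<close>) and reads the state \<open>v\<close> of \<open>x\<close>.\<close>
definition receiver_choice :: "tau \<Rightarrow> ('a \<Rightarrow> real) \<Rightarrow> 'a \<Rightarrow> 'a \<Rightarrow> real" where
  "receiver_choice v g x y = (case v of Sel \<Rightarrow> g y | NSel \<Rightarrow> g x | Unk \<Rightarrow> (g x + g y) / 2)"

lemma expectation_step_single:
  fixes \<Psi> :: "'a tstate \<times> 'a \<times> role \<Rightarrow> real"
  shows "card R = 1 \<Longrightarrow>
    measure_pmf.expectation (step d j R \<tau>) \<Psi> = \<Psi> (reset d j (the_elem R) \<tau>, the_elem R, Single)"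
  unfolding step_def Let_def by simp

lemma expectation_step_pair:
  fixes \<Psi> :: "'a tstate \<times> 'a \<times> role \<Rightarrow> real" and d j :: nat and \<tau> :: "'a tstate"
  assumes "card R \<noteq> 1"
  defines "g \<equiv> \<lambda>w. \<Psi> (receiver_state d j R \<tau>, w, Receiver)"
  shows "measure_pmf.expectation (step d j R \<tau>) \<Psi> =
    (\<Psi> (sender_state d j R \<tau> True True, lab R True, Sender)
      + \<Psi> (sender_state d j R \<tau> True False, lab R True, Sender)
      + \<Psi> (sender_state d j R \<tau> False True, lab R False, Sender)
      + \<Psi> (sender_state d j R \<tau> False False, lab R False, Sender)) / 8
    + (receiver_choice (\<tau> (lab R True) j) g (lab R True) (lab R False)
      + receiver_choice (\<tau> (lab R False) j) g (lab R False) (lab R True)) / 4"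
  using assms(1) unfolding step_def Let_def g_def
  by (simp add: expectation_bind_pmf_finite sender_state_def receiver_state_def receiver_choice_def
      split: tau.splits) (simp add: field_simps)

section \<open>A mark left in an earlier round\<close>

lemma set_tau_commute:
  "y \<noteq> x \<Longrightarrow> set_tau d j y w (set_tau d j0 x v \<sigma>) = set_tau d j0 x v (set_tau d j y w \<sigma>)"
  by (auto simp: set_tau_def fun_eq_iff)

lemma set_tau_apply_self: "j0 < j \<Longrightarrow> j < j0 + d \<Longrightarrow> set_tau d j0 x v \<sigma> x j = v"
  unfolding set_tau_def by auto

lemma set_tau_apply_other [simp]: "y \<noteq> x \<Longrightarrow> set_tau d j x v \<sigma> y t = \<sigma> y t"
  by (simp add: set_tau_def)

lemma forget_before_set_tau_expired:
  "j0 + d \<le> j \<Longrightarrow> forget_before j (set_tau d j0 x v \<sigma>) = forget_before j \<sigma>"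
  by (auto simp: forget_before_def set_tau_def fun_eq_iff)

lemma forget_before_set_tau_overwritten:
  "j0 \<le> j \<Longrightarrow> forget_before (Suc j) (set_tau d j x w (set_tau d j0 x v \<sigma>)) =
     forget_before (Suc j) (set_tau d j x w \<sigma>)"
  by (auto simp: forget_before_def set_tau_def fun_eq_iff)

lemma forget_before_set_tau_overwritten_pair:
  "j0 \<le> j \<Longrightarrow> x = a \<or> x = b \<Longrightarrow>
    forget_before (Suc j) (set_tau d j a u (set_tau d j b w (set_tau d j0 x v \<sigma>))) =
    forget_before (Suc j) (set_tau d j a u (set_tau d j b w \<sigma>))"
  by (auto simp: forget_before_def set_tau_def fun_eq_iff)

lemma step_commute:
  assumes commute: "\<And>y w \<tau>. y \<in> R \<Longrightarrow> set_tau d j y w (\<phi> \<tau>) = \<phi> (set_tau d j y w \<tau>)"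
    and apply_eq: "\<And>y. y \<in> R \<Longrightarrow> \<phi> \<sigma> y j = \<sigma> y j"
    and card: "card R = 1 \<or> card R = 2"
  shows "step d j R (\<phi> \<sigma>) = map_pmf (apfst \<phi>) (step d j R \<sigma>)"
proof (cases "card R = 1")
  case True
  then have "the_elem R \<in> R" by (metis card_1_singletonE singletonI the_elem_eq)
  with True show ?thesis by (simp add: step_def reset_def Let_def commute)
next
  case False
  then have lab_in: "lab R b \<in> R" for b using card lab_two[of R] by (cases b) auto
  from False show ?thesis
    unfolding step_def reset_def Let_def
    by (simp only: if_False map_bind_pmf)
      (intro bind_pmf_cong refl; simp add: map_bind_pmf commute apply_eq lab_in)
qed

lemma step_set_tau_other:
  assumes "x \<notin> R" "card R = 1 \<or> card R = 2"
  shows "step d j R (set_tau d j0 x v \<sigma>) = map_pmf (apfst (set_tau d j0 x v)) (step d j R \<sigma>)"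
  using assms by (intro step_commute set_tau_commute set_tau_apply_other) auto

definition forgets_before :: "nat \<Rightarrow> ('a tstate \<times> 'a \<times> role \<Rightarrow> real) \<Rightarrow> bool" where
  "forgets_before j \<Psi> \<longleftrightarrow>
     (\<forall>\<tau> \<tau>' w r. forget_before j \<tau> = forget_before j \<tau>' \<longrightarrow> \<Psi> (\<tau>, w, r) = \<Psi> (\<tau>', w, r))"

lemma forgets_beforeD:
  "forgets_before j \<Psi> \<Longrightarrow> forget_before j \<tau> = forget_before j \<tau>' \<Longrightarrow> \<Psi> (\<tau>, w, r) = \<Psi> (\<tau>', w, r)"
  unfolding forgets_before_def by blast

text \<open>The mark on \<open>x\<close> matters only when a receiver draws \<open>x\<close> in round \<open>j\<close>: every state
  passed on to later rounds overwrites the entries of \<open>x\<close>.\<close>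
lemma expectation_step_marked:
  fixes \<sigma> :: "'a tstate"
  assumes R: "R = {x, z}" "x \<noteq> z" and j: "j0 < j" "j < j0 + d" and \<Psi>: "forgets_before (Suc j) \<Psi>"
  defines "g \<equiv> \<lambda>w. \<Psi> (receiver_state d j R \<sigma>, w, Receiver)"
  shows "measure_pmf.expectation (step d j R (set_tau d j0 x v \<sigma>)) \<Psi> =
    measure_pmf.expectation (step d j R \<sigma>) \<Psi>
    + (receiver_choice v g x z - receiver_choice (\<sigma> x j) g x z) / 4"
proof -
  obtain b where b: "lab R b = x" "lab R (\<not> b) = z" using lab_pair[OF R] .
  have pair: "card R \<noteq> 1" using R by simp
  let ?\<sigma>' = "set_tau d j0 x v \<sigma>"
  have x_lab: "x = lab R m \<or> x = lab R (\<not> m)" for m using b by (cases m; cases b) auto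
  then have sender: "\<Psi> (sender_state d j R ?\<sigma>' l m, w, r) = \<Psi> (sender_state d j R \<sigma> l m, w, r)"
    for l m w r
    using j unfolding sender_state_def reset_def
    by (intro forgets_beforeD[OF \<Psi>] forget_before_set_tau_overwritten_pair) simp_all
  have "\<Psi> (receiver_state d j R ?\<sigma>', w, r) = \<Psi> (receiver_state d j R \<sigma>, w, r)" for w r
    using j x_lab[of True] unfolding receiver_state_def reset_def
    by (intro forgets_beforeD[OF \<Psi>] forget_before_set_tau_overwritten_pair) simp_all
  then have receiver: "(\<lambda>w. \<Psi> (receiver_state d j R ?\<sigma>', w, Receiver)) = g"
    unfolding g_def by simp
  have read: "?\<sigma>' x j = v" "?\<sigma>' z j = \<sigma> z j"
    using set_tau_apply_self[OF j] R(2) by simp_all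
  show ?thesis
    using b unfolding expectation_step_pair[OF pair] receiver g_def[symmetric] sender
    by (cases b) (simp_all add: read field_simps)
qed

lemma step_exchange:
  fixes \<Psi>1 \<Psi>2 :: "'a tstate \<times> 'a \<times> role \<Rightarrow> real"
  assumes R: "R = {x, z}" "x \<noteq> z" and j: "j0 < j" "j < j0 + d"
    and \<Psi>: "forgets_before (Suc j) \<Psi>1" "forgets_before (Suc j) \<Psi>2"
    and swap: "\<Psi>1 (receiver_state d j R \<sigma>, x, Receiver) + \<Psi>2 (receiver_state d j R \<sigma>, z, Receiver)
      \<le> \<Psi>1 (receiver_state d j R \<sigma>, z, Receiver) + \<Psi>2 (receiver_state d j R \<sigma>, x, Receiver)"
  shows "measure_pmf.expectation (step d j R (set_tau d j0 x Unk \<sigma>)) \<Psi>1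
      + measure_pmf.expectation (step d j R (set_tau d j0 x Unk \<sigma>)) \<Psi>2
    \<le> measure_pmf.expectation (step d j R (set_tau d j0 x Sel \<sigma>)) \<Psi>1
      + measure_pmf.expectation (step d j R (set_tau d j0 x NSel \<sigma>)) \<Psi>2"
  using swap unfolding expectation_step_marked[OF R j \<Psi>(1)] expectation_step_marked[OF R j \<Psi>(2)]
  by (simp add: receiver_choice_def field_simps)

text \<open>Selecting \<open>x\<close> instead of \<open>z\<close> at round \<open>j + length p\<close>, which precedes the horizon \<open>h\<close>,
  increases \<open>F1\<close> by no more than \<open>F2\<close>.\<close>
definition swap_gain_le ::
  "nat \<Rightarrow> 'a \<Rightarrow> nat \<Rightarrow> ('a list \<times> role list \<Rightarrow> real) \<Rightarrow> ('a list \<times> role list \<Rightarrow> real) \<Rightarrow> bool"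
  where "swap_gain_le h x j F1 F2 \<longleftrightarrow> (\<forall>p q z vs rs. j + length p < h \<longrightarrow>
    F1 (p @ x # vs, q @ rs) + F2 (p @ z # vs, q @ rs) \<le>
    F1 (p @ z # vs, q @ rs) + F2 (p @ x # vs, q @ rs))"

lemma swap_gain_leD:
  "swap_gain_le h x j F1 F2 \<Longrightarrow> j + length p < h \<Longrightarrow>
    F1 (p @ x # vs, q @ rs) + F2 (p @ z # vs, q @ rs) \<le>
    F1 (p @ z # vs, q @ rs) + F2 (p @ x # vs, q @ rs)"
  unfolding swap_gain_le_def by blast

lemma swap_gain_le_prepend_out:
  assumes "swap_gain_le h x j F1 F2"
  shows "swap_gain_le h x (Suc j) (prepend_out w r F1) (prepend_out w r F2)"
  unfolding swap_gain_le_def prepend_out_def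
  using swap_gain_leD[OF assms, where p="w # _" and q="r # _"] by simp

lemma forgets_before_run_exp:
  "forgets_before (Suc j) (\<lambda>(\<tau>, w, r). run_exp d Rs (Suc j) \<tau> (G w r))"
  unfolding forgets_before_def by (auto intro: run_exp_forget_before)

lemma run_exp_mark_exchange:
  assumes "\<forall>R \<in> set Rs. card R = 1 \<or> card R = 2" "j0 < j" "swap_gain_le (j0 + d) x j F1 F2"
  shows "run_exp d Rs j (set_tau d j0 x Unk \<sigma>) F1 + run_exp d Rs j (set_tau d j0 x Unk \<sigma>) F2
    \<le> run_exp d Rs j (set_tau d j0 x Sel \<sigma>) F1 + run_exp d Rs j (set_tau d j0 x NSel \<sigma>) F2"
  using assms
proof (induction Rs arbitrary: j \<sigma> F1 F2)
  case Nil
  then show ?case by (simp add: run_exp_Nil)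
next
  case (Cons R Rs)
  have card: "card R = 1 \<or> card R = 2" and cards: "\<forall>R \<in> set Rs. card R = 1 \<or> card R = 2"
    using Cons.prems(1) by simp_all
  define \<Psi> where "\<Psi> F = (\<lambda>(\<tau>', w, r). run_exp d Rs (Suc j) \<tau>' (prepend_out w r F))" for F
  have exp: "run_exp d (R # Rs) j \<tau> F = measure_pmf.expectation (step d j R \<tau>) (\<Psi> F)" for \<tau> F
    unfolding run_exp_Cons \<Psi>_def ..
  consider (outside) "x \<notin> R" | (expired) "j0 + d \<le> j" | (single) "x \<in> R" "card R = 1"
    | (pair) z where "R = {x, z}" "x \<noteq> z" "j < j0 + d"
    using card card_two_other[of R x] by (metis not_le)
  then show ?case
  proof cases
    case outside
    have "run_exp d (R # Rs) j (set_tau d j0 x v \<sigma>) F = measure_pmf.expectation (step d j R \<sigma>)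
        (\<lambda>(\<tau>', w, r). run_exp d Rs (Suc j) (set_tau d j0 x v \<tau>') (prepend_out w r F))" for v F
      unfolding exp step_set_tau_other[OF outside card] \<Psi>_def by (simp add: case_prod_beta')
    then show ?thesis
      using Cons.IH[OF cards _ swap_gain_le_prepend_out[OF Cons.prems(3)]] Cons.prems(2)
      by (simp add: expectation_add_finite[OF finite_set_pmf_step] case_prod_beta'
          expectation_mono_finite[OF finite_set_pmf_step])
  next
    case expired
    then have "run_exp d (R # Rs) j (set_tau d j0 x v \<sigma>) F = run_exp d (R # Rs) j \<sigma> F" for v F
      by (intro run_exp_forget_before forget_before_set_tau_expired)
    then show ?thesis by simp
  next
    case single
    then have "the_elem R = x" by (metis card_1_singletonE singletonD the_elem_eq)
    then have "run_exp d (R # Rs) j (set_tau d j0 x v \<sigma>) F =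
        run_exp d Rs (Suc j) (reset d j x \<sigma>) (prepend_out x Single F)"
      for v F
      unfolding exp expectation_step_single[OF single(2)] \<Psi>_def reset_def
      using Cons.prems(2)
      by (simp, intro run_exp_forget_before forget_before_set_tau_overwritten) simp
    then show ?thesis by simp
  next
    case pair
    have "\<Psi> F1 (receiver_state d j R \<sigma>, x, Receiver) + \<Psi> F2 (receiver_state d j R \<sigma>, z, Receiver)
      \<le> \<Psi> F1 (receiver_state d j R \<sigma>, z, Receiver) + \<Psi> F2 (receiver_state d j R \<sigma>, x, Receiver)"
      unfolding \<Psi>_def prepend_out_def
      using swap_gain_leD[OF Cons.prems(3), where p="[]" and q="[Receiver]"] pair(3)
      by (simp add: run_exp_add run_exp_mono)
    with pair Cons.prems(2) show ?thesis
      unfolding exp \<Psi>_def by (intro step_exchange forgets_before_run_exp)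
  qed
qed

section \<open>The first round\<close>

lemma set_tau_Unk_Unk [simp]: "set_tau d j x Unk (\<lambda>_ _. Unk) = (\<lambda>_ _. Unk)"
  by (auto simp: set_tau_def fun_eq_iff)

definition sender_mean :: "nat \<Rightarrow> 'a set list \<Rightarrow> 'a set \<Rightarrow> ('a list \<times> role list \<Rightarrow> real) \<Rightarrow> real" where
  "sender_mean d Rs R F =
    (run_exp d Rs 2 (set_tau d 1 (lab R True) Sel (\<lambda>_ _. Unk)) (prepend_out (lab R True) Sender F)
     + run_exp d Rs 2 (set_tau d 1 (lab R False) NSel (\<lambda>_ _. Unk)) (prepend_out (lab R True) Sender F)
     + run_exp d Rs 2 (set_tau d 1 (lab R True) NSel (\<lambda>_ _. Unk)) (prepend_out (lab R False) Sender F)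
     + run_exp d Rs 2 (set_tau d 1 (lab R False) Sel (\<lambda>_ _. Unk)) (prepend_out (lab R False) Sender F)) / 4"

definition receiver_mean :: "nat \<Rightarrow> 'a set list \<Rightarrow> 'a set \<Rightarrow> ('a list \<times> role list \<Rightarrow> real) \<Rightarrow> real" where
  "receiver_mean d Rs R F =
    (run_exp d Rs 2 (\<lambda>_ _. Unk) (prepend_out (lab R True) Receiver F)
     + run_exp d Rs 2 (\<lambda>_ _. Unk) (prepend_out (lab R False) Receiver F)) / 2"

lemma expectation_alg1_pair:
  assumes "card R = 2"
  shows "measure_pmf.expectation (alg1 d (R # Rs)) F =
    (sender_mean d Rs R F + receiver_mean d Rs R F) / 2"
proof -
  have pair: "card R \<noteq> 1" using assms by simp
  have "measure_pmf.expectation (alg1 d (R # Rs)) F = run_exp d (R # Rs) 1 (\<lambda>_ _. Unk) F"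
    unfolding alg1_def run_exp_def ..
  also have "\<dots> = (sender_mean d Rs R F + receiver_mean d Rs R F) / 2"
    unfolding run_exp_Cons expectation_step_pair[OF pair]
    by (simp add: sender_mean_def receiver_mean_def sender_state_def receiver_state_def reset_def
        receiver_choice_def numeral_2_eq_2 field_simps)
  finally show ?thesis .
qed

lemma prepend_out_role_indicator:
  "prepend_out w r (\<lambda>out. indicator {out. snd out ! 0 = r'} out * F out) =
     (if r = r' then prepend_out w r F else (\<lambda>_. 0))"
  by (auto simp: prepend_out_def fun_eq_iff)

lemma cond_expectation_alg1_pair:
  fixes F :: "'a list \<times> role list \<Rightarrow> real"
  assumes "card R = 2"
  shows "measure_pmf.expectation (cond_pmf (alg1 d (R # Rs)) {out. snd out ! 0 = Receiver}) F =
      receiver_mean d Rs R F"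
    and "measure_pmf.expectation (cond_pmf (alg1 d (R # Rs)) {out. snd out ! 0 = Sender}) F =
      sender_mean d Rs R F"
proof -
  let ?p = "alg1 d (R # Rs)"
  have fin: "finite (set_pmf ?p)" unfolding alg1_def by (rule finite_set_pmf_run)
  have restrict: "measure_pmf.expectation ?p (\<lambda>out. indicator {out. snd out ! 0 = r} out * G out) =
      (if r = Sender then sender_mean d Rs R G else 0) / 2
      + (if r = Receiver then receiver_mean d Rs R G else 0) / 2"
    for r and G :: "'a list \<times> role list \<Rightarrow> real"
    unfolding expectation_alg1_pair[OF assms]
    by (cases r)
      (simp_all add: sender_mean_def receiver_mean_def prepend_out_role_indicator run_exp_const)
  have prob: "measure_pmf.prob ?p {out. snd out ! 0 = r} = 1 / 2" if "r \<noteq> Single" for r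
    using restrict[of r "\<lambda>_. 1"] that
    by (cases r) (simp_all add: sender_mean_def receiver_mean_def prepend_out_def run_exp_const)
  have "set_pmf ?p \<inter> {out. snd out ! 0 = r} \<noteq> {}" if "r \<noteq> Single" for r
    using prob[OF that] measure_pmf_zero_iff[of ?p "{out. snd out ! 0 = r}"] by auto
  with fin restrict show "measure_pmf.expectation (cond_pmf ?p {out. snd out ! 0 = Receiver}) F =
      receiver_mean d Rs R F" "measure_pmf.expectation (cond_pmf ?p {out. snd out ! 0 = Sender}) F =
      sender_mean d Rs R F"
    by (simp_all add: expectation_cond_pmf_finite prob)
qed

lemma prepend_out_num_matched:
  "prepend_out w r (num_matched d i) = (\<lambda>out. real (greedy_count d i 0 (w # fst out)))"
  by (simp add: prepend_out_def num_matched_eq_greedy_count fun_eq_iff)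

lemma swap_gain_le_greedy_count:
  assumes "x \<noteq> z" "i = x \<or> i = z"
  shows "swap_gain_le (Suc d) x 2
    (\<lambda>out. real (greedy_count d i 0 (x # fst out))) (\<lambda>out. real (greedy_count d i 0 (z # fst out)))"
  unfolding swap_gain_le_def
proof (intro allI impI)
  fix p :: "'a list" and q :: "role list" and y vs rs
  assume "2 + length p < Suc d"
  then have "greedy_count d i 0 (x # p @ x # vs) + greedy_count d i 0 (z # p @ y # vs)
      \<le> greedy_count d i 0 (x # p @ y # vs) + greedy_count d i 0 (z # p @ x # vs)"
    using assms by (intro greedy_count_exchange) simp_all
  then show "real (greedy_count d i 0 (x # fst (p @ x # vs, q @ rs)))
      + real (greedy_count d i 0 (z # fst (p @ y # vs, q @ rs)))
    \<le> real (greedy_count d i 0 (x # fst (p @ y # vs, q @ rs)))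
      + real (greedy_count d i 0 (z # fst (p @ x # vs, q @ rs)))"
    by (simp flip: of_nat_add)
qed

lemma receiver_mean_le_sender_mean:
  assumes R: "card R = 2" "i \<in> R" and cards: "\<forall>R \<in> set Rs. card R = 1 \<or> card R = 2"
  shows "receiver_mean d Rs R (num_matched d i) \<le> sender_mean d Rs R (num_matched d i)"
proof -
  let ?U = "\<lambda>_ _. Unk" and ?G = "\<lambda>w out. real (greedy_count d i 0 (w # fst out))"
  have mark: "run_exp d Rs 2 ?U (?G x) + run_exp d Rs 2 ?U (?G z)
      \<le> run_exp d Rs 2 (set_tau d 1 x Sel ?U) (?G x)
        + run_exp d Rs 2 (set_tau d 1 x NSel ?U) (?G z)"
    if "R = {x, z}" "x \<noteq> z" for x z
    using run_exp_mark_exchange[OF cards, of 1 2 d x "?G x" "?G z" ?U]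
      swap_gain_le_greedy_count[OF \<open>x \<noteq> z\<close>] R(2) that(1)
    by simp
  have "R = {lab R True, lab R False}" "R = {lab R False, lab R True}" "lab R True \<noteq> lab R False"
    using lab_two[OF R(1)] by auto
  from mark[OF this(1,3)] mark[OF this(2) this(3)[symmetric]] show ?thesis
    unfolding receiver_mean_def sender_mean_def prepend_out_num_matched by simp
qed

theorem claim3:
  fixes V :: "'a set" and d :: nat and Rs :: "'a set list" and i :: 'a
  assumes "finite V" and "d \<ge> 1"
    and "\<forall>R \<in> set Rs. R \<subseteq> V \<and> (card R = 1 \<or> card R = 2)"
    and "Rs \<noteq> []" and "card (Rs ! 0) = 2" and "i \<in> Rs ! 0"
  shows "measure_pmf.expectation (cond_pmf (alg1 d Rs) {out. snd out ! 0 = Receiver}) (num_matched d i)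
           \<le> measure_pmf.expectation (alg1 d Rs) (num_matched d i)
       \<and> measure_pmf.expectation (alg1 d Rs) (num_matched d i)
           \<le> measure_pmf.expectation (cond_pmf (alg1 d Rs) {out. snd out ! 0 = Sender}) (num_matched d i)"
proof -
  obtain R Rs' where Rs: "Rs = R # Rs'" using assms(4) by (cases Rs) auto
  have R: "card R = 2" "i \<in> R" and cards: "\<forall>R \<in> set Rs'. card R = 1 \<or> card R = 2"
    using assms(3,5,6) unfolding Rs by auto
  show ?thesis
    unfolding Rs expectation_alg1_pair[OF R(1)] cond_expectation_alg1_pair[OF R(1)]
    using receiver_mean_le_sender_mean[OF R cards, of d] by simp
qed

end
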